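(* Let $C$ be an independent set of the Kneser graph of flags of type $\{2,3\}$ of $\mathrm{PG}(6,q)$ and let $\xi\in\mathbb{N}$ be such that every solid of $\mathrm{PG}(6,q)$ occurs in at most $\xi$ flags of $C$. Let $(E,S)\in C$. Then there are at most $$(q^2+q+1)\begin{bmatrix}5\\2\end{bmatrix}_q\xi=(q^8+2q^7+4q^6+5q^5+6q^4+5q^3+4q^2+2q+1)\xi$$ flags $(E',S')\in C$ with $E'\cap E=\emptyset$ and $S'\cap E\neq\emptyset$.
   Context: Dimensions are projective (planes 2, solids 3). A flag of type $\{2,3\}$ is a pair $(E,S)$ of a plane $E$ and a solid $S$ with $E\subseteq S$; in the Kneser graph distinct flags $(E,S),(E',S')$ are adjacent iff $E\cap S'=\emptyset$ and $E'\cap S=\emptyset$. $\begin{bmatrix}5\\2\end{bmatrix}_q=\frac{(q^5-1)(q^4-1)}{(q^2-1)(q-1)}$. *)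

theory Defs
  imports "HOL-Analysis.Analysis" "HOL-Library.Numeral_Type"
begin

text \<open>PG(6,q) is modelled by the vector space F^7 over a finite field F with q = CARD(F).
  Projective subspaces of projective dimension d are vector subspaces of dimension d+1;
  projectively empty intersection means the vector subspaces meet only in 0.\<close>

type_synonym 'F pt7 = "'F ^ 7"

definition pg_plane :: "('F::field) pt7 set \<Rightarrow> bool" where
  "pg_plane E \<longleftrightarrow> vec.subspace E \<and> vec.dim E = 3"

definition pg_solid :: "('F::field) pt7 set \<Rightarrow> bool" where
  "pg_solid S \<longleftrightarrow> vec.subspace S \<and> vec.dim S = 4"

definition pg_flag23 :: "('F::field) pt7 set \<times> 'F pt7 set \<Rightarrow> bool" where
  "pg_flag23 f \<longleftrightarrow> pg_plane (fst f) \<and> pg_solid (snd f) \<and> fst f \<subseteq> snd f"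

definition pg_disjoint :: "('F::field) pt7 set \<Rightarrow> 'F pt7 set \<Rightarrow> bool" where
  "pg_disjoint A B \<longleftrightarrow> A \<inter> B = {0}"

definition kneser_adj :: "('F::field) pt7 set \<times> 'F pt7 set \<Rightarrow> 'F pt7 set \<times> 'F pt7 set \<Rightarrow> bool" where
  "kneser_adj f g \<longleftrightarrow> f \<noteq> g \<and> pg_disjoint (fst f) (snd g) \<and> pg_disjoint (fst g) (snd f)"

definition kneser_indep :: "(('F::field) pt7 set \<times> 'F pt7 set) set \<Rightarrow> bool" where
  "kneser_indep C \<longleftrightarrow> (\<forall>f\<in>C. pg_flag23 f) \<and> (\<forall>f\<in>C. \<forall>g\<in>C. \<not> kneser_adj f g)"

definition gauss_5_2 :: "nat \<Rightarrow> nat" where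
  "gauss_5_2 q = ((q^5 - 1) * (q^4 - 1)) div ((q^2 - 1) * (q - 1))"

end

(*
  The flags counted have a plane E' missing E inside a solid S' meeting E, so S' meets E in a
  single point.  At most xi flags share a solid, and there are q^2 + q + 1 points in E, so it
  suffices to bound the solids over a fixed point P by [5 2]_q.  Two such solids come from
  non-adjacent flags, so a plane of one meets the other solid; hence distinct solids over P share
  a vector outside E.  Cutting them with a hyperplane H that misses P therefore yields an
  intersecting family of planes in the projective 5-space H, which has at most [5 2]_q members
  by the Erdos-Ko-Rado theorem for planes of PG(5, q).  That theorem is proved with Katona's
  averaging argument: an irreducible cubic over GF(q) yields a spread of q^3 + 1 pairwise disjoint
  planes, all its images under the general linear group are considered, and each image contains
  at most one member of the family.
*)
theory Submission
  imports Defs "HOL-Computational_Algebra.Polynomial_Factorial"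
begin

lemma card_filter_bij_betw:
  assumes "bij_betw g A A"
  shows "card {x \<in> A. P (g x)} = card {x \<in> A. P x}"
proof -
  have "g ` {x \<in> A. P (g x)} = {x \<in> A. P x}" "inj_on g {x \<in> A. P (g x)}"
    using assms by (auto simp: bij_betw_def intro: inj_on_subset)
  then show ?thesis by (metis card_image)
qed

text \<open>Katona's averaging argument: \<open>\<sigma> j\<close> maps \<open>{a \<in> A. P (\<sigma> j a)}\<close> bijectively onto
  \<open>{a \<in> A. P a}\<close>, and these sets are pairwise disjoint for distinct \<open>j\<close>.\<close>

lemma card_mult_le_by_averaging:
  assumes "finite A" "finite J"
    and bij: "\<And>j. j \<in> J \<Longrightarrow> bij_betw (\<sigma> j) A A"
    and unique: "\<And>a j j'. a \<in> A \<Longrightarrow> j \<in> J \<Longrightarrow> j' \<in> J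
                   \<Longrightarrow> P (\<sigma> j a) \<Longrightarrow> P (\<sigma> j' a) \<Longrightarrow> j = j'"
  shows "card J * card {a \<in> A. P a} \<le> card A"
proof -
  have count: "card {x \<in> X. R x} = (\<Sum>x\<in>X. if R x then 1 else 0)" if "finite X" for X R
    unfolding card_eq_sum using that by (rule sum.inter_filter)
  have "card J * card {a \<in> A. P a} = (\<Sum>j\<in>J. card {a \<in> A. P (\<sigma> j a)})"
    using card_filter_bij_betw[OF bij] by simp
  also have "\<dots> = (\<Sum>a\<in>A. card {j \<in> J. P (\<sigma> j a)})"
    using assms(1,2) by (simp add: count sum.swap[of _ J A])
  also have "\<dots> \<le> (\<Sum>a\<in>A. 1)"
  proof (rule sum_mono)
    fix a assume "a \<in> A"
    then show "card {j \<in> J. P (\<sigma> j a)} \<le> 1"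
      using assms(2) unique[of a] by (subst One_nat_def, subst card_le_Suc0_iff_eq) auto
  qed
  finally show ?thesis by simp
qed

lemma card_filter_mem_eq_mult:
  assumes "finite A" "finite I" "\<And>U. U \<in> I \<Longrightarrow> card {a \<in> A. g a = U} = c"
  shows "card {a \<in> A. g a \<in> I} = card I * c"
proof -
  have "{a \<in> A. g a \<in> I} = (\<Union>U\<in>I. {a \<in> A. g a = U})" by auto
  also have "card \<dots> = (\<Sum>U\<in>I. card {a \<in> A. g a = U})"
    using assms by (intro card_UN_disjoint) auto
  finally show ?thesis using assms(3) by simp
qed

lemma card_le_card_image_mult:
  assumes "finite A" "\<And>b. b \<in> g ` A \<Longrightarrow> card {a \<in> A. g a = b} \<le> k"
  shows "card A \<le> card (g ` A) * k"
proof -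
  have "card A = card (\<Union>b\<in>g ` A. {a \<in> A. g a = b})" by (rule arg_cong[of _ _ card]) blast
  also have "\<dots> \<le> (\<Sum>b\<in>g ` A. card {a \<in> A. g a = b})" by (rule card_UN_le) (simp add: assms(1))
  also have "\<dots> \<le> (\<Sum>b\<in>g ` A. k)" by (rule sum_mono) (rule assms(2))
  finally show ?thesis by simp
qed

section \<open>Counting vectors and subspaces over a finite field\<close>

lemma card_field_ge_2: "2 \<le> CARD('F::{field,finite})"
proof -
  have "card {0::'F, 1} \<le> CARD('F)" by (rule card_mono) auto
  then show ?thesis by simp
qed

lemma card_span_independent:
  fixes B :: "('F::{field,finite}^'n) set"
  assumes "vec.independent B"
  shows "card (vec.span B) = CARD('F) ^ card B"
  using vec.finiteI_independent[OF assms] assms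
proof (induction B rule: finite_induct)
  case empty
  then show ?case by simp
next
  case (insert b B)
  then have indep: "vec.independent B" and b: "b \<notin> vec.span B"
    by (auto simp: vec.independent_insert)
  let ?g = "\<lambda>(x, c). x + c *s b"
  have span_eq: "vec.span (insert b B) = ?g ` (vec.span B \<times> UNIV)"
  proof (rule set_eqI)
    fix y
    have "y \<in> vec.span (insert b B) \<longleftrightarrow> (\<exists>c. y - c *s b \<in> vec.span B)"
      by (simp add: vec.span_insert)
    also have "\<dots> \<longleftrightarrow> y \<in> ?g ` (vec.span B \<times> UNIV)"
      by (auto simp: image_iff) (metis add_diff_cancel diff_add_cancel)+
    finally show "y \<in> vec.span (insert b B) \<longleftrightarrow> y \<in> ?g ` (vec.span B \<times> UNIV)" .
  qed
  have "inj_on ?g (vec.span B \<times> UNIV)"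
  proof (rule inj_onI, clarsimp)
    fix x c x' c'
    assume x: "x \<in> vec.span B" "x' \<in> vec.span B" and eq: "x + c *s b = x' + c' *s b"
    show "x = x' \<and> c = c'"
    proof (cases "c = c'")
      case True
      then show ?thesis using eq by simp
    next
      case False
      have diff: "(c - c') *s b = x' - x"
        using eq by (simp add: algebra_simps vector_sadd_rdistrib vector_ssub_ldistrib)
      have "b = (inverse (c - c') * (c - c')) *s b"
        using False by simp
      also have "\<dots> = inverse (c - c') *s ((c - c') *s b)"
        by (simp only: vector_smult_assoc)
      also have "\<dots> \<in> vec.span B"
        unfolding diff by (intro vec.span_scale vec.span_diff x)
      finally show ?thesis using b by blast
    qed
  qed
  then have "card (vec.span (insert b B)) = card (vec.span B) * CARD('F)"
    unfolding span_eq by (simp add: card_image card_cartesian_product)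
  then show ?case using insert indep by simp
qed

lemma card_subspace:
  fixes W :: "('F::{field,finite}^'n) set"
  assumes "vec.subspace W"
  shows "card W = CARD('F) ^ vec.dim W"
proof -
  obtain B where "B \<subseteq> W" "vec.independent B" "W \<subseteq> vec.span B" "card B = vec.dim W"
    using vec.basis_exists by blast
  moreover from this have "vec.span B = W" using assms vec.span_minimal by blast
  ultimately show ?thesis using card_span_independent by metis
qed

lemma dim_1_subspace_eq_span:
  fixes P :: "('F::field^'n) set"
  assumes "vec.subspace P" "vec.dim P = 1" "x \<in> P" "x \<noteq> 0"
  shows "P = vec.span {x}"
proof
  show "vec.span {x} \<subseteq> P" using assms vec.span_minimal by blast
  show "P \<subseteq> vec.span {x}"
    using assms by (intro vec.card_ge_dim_independent) (auto simp: vec.independent_insert vec.span_empty)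
qed

definition pg_points :: "('F::field^'n) set \<Rightarrow> ('F^'n) set set" where
  "pg_points W = {P. vec.subspace P \<and> vec.dim P = 1 \<and> P \<subseteq> W}"

lemma card_pg_points_mult:
  fixes W :: "('F::{field,finite}^'n) set"
  assumes W: "vec.subspace W"
  shows "card (pg_points W) * (CARD('F) - 1) = CARD('F) ^ vec.dim W - 1"
proof -
  define L where "L = pg_points W"
  have card_L: "card (P - {0}) = CARD('F) - 1" if "P \<in> L" for P
    using that card_subspace[of P] vec.subspace_0[of P] by (simp add: L_def pg_points_def card_Diff_singleton)
  have disjoint: "(P - {0}) \<inter> (P' - {0}) = {}" if "P \<in> L" "P' \<in> L" "P \<noteq> P'" for P P'
    using that dim_1_subspace_eq_span unfolding L_def pg_points_def by blast
  have cover: "(\<Union>P\<in>L. P - {0}) = W - {0}"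
  proof
    show "W - {0} \<subseteq> (\<Union>P\<in>L. P - {0})"
    proof
      fix x assume "x \<in> W - {0}"
      then have "vec.span {x} \<in> L" "x \<in> vec.span {x} - {0}"
        using W vec.span_minimal[of "{x}" W] by (auto simp: L_def pg_points_def vec.span_base)
      then show "x \<in> (\<Union>P\<in>L. P - {0})" by blast
    qed
  qed (auto simp: L_def pg_points_def)
  have "card L * (CARD('F) - 1) = (\<Sum>P\<in>L. card (P - {0}))" using card_L by simp
  also have "\<dots> = card (W - {0})"
    unfolding cover[symmetric] by (rule card_UN_disjoint[symmetric]) (auto simp: disjoint)
  also have "\<dots> = CARD('F) ^ vec.dim W - 1"
    using card_subspace[OF W] vec.subspace_0[OF W] by (simp add: card_Diff_singleton)
  finally show ?thesis unfolding L_def .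
qed

lemma card_pg_points_plane:
  fixes E :: "('F::{field,finite}^'n) set"
  assumes "vec.subspace E" "vec.dim E = 3"
  shows "card (pg_points E) = CARD('F)^2 + CARD('F) + 1"
proof -
  define q where "q = CARD('F)"
  have q: "q \<ge> 2" by (simp add: q_def card_field_ge_2)
  have "card (pg_points E) * (q - 1) = q ^ 3 - 1"
    using card_pg_points_mult[OF assms(1)] assms(2) unfolding q_def by simp
  also have "\<dots> = (q^2 + q + 1) * (q - 1)"
    by (cases q) (simp_all add: algebra_simps power2_eq_square power3_eq_cube)
  finally have "card (pg_points E) * (q - 1) = (q^2 + q + 1) * (q - 1)" .
  moreover have "q - 1 \<noteq> 0" using q by simp
  ultimately have "card (pg_points E) = q^2 + q + 1" using mult_right_cancel by blast
  then show ?thesis by (simp add: q_def)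
qed

definition independent_list :: "('F::field^'n) list \<Rightarrow> bool" where
  "independent_list xs \<longleftrightarrow> distinct xs \<and> vec.independent (set xs)"

lemma independent_list_Nil [simp]: "independent_list []"
  by (simp add: independent_list_def vec.independent_empty)

lemma independent_list_snoc:
  "independent_list (xs @ [x]) \<longleftrightarrow> independent_list xs \<and> x \<notin> vec.span (set xs)"
  by (cases "x \<in> set xs") (auto simp: independent_list_def vec.independent_insert vec.span_base)

lemma independent_list_appendD: "independent_list (xs @ ys) \<Longrightarrow> independent_list xs"
  unfolding independent_list_def by (metis distinct_append set_append sup_ge1 vec.independent_mono)

lemma card_independent_list: "independent_list xs \<Longrightarrow> card (set xs) = length xs"
  by (simp add: independent_list_def distinct_card)

lemma span_independent_list_eq:
  assumes "vec.subspace W" "set xs \<subseteq> W" "independent_list xs" "length xs = vec.dim W"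
  shows "vec.span (set xs) = W"
proof
  show "vec.span (set xs) \<subseteq> W" using assms vec.span_minimal by blast
  show "W \<subseteq> vec.span (set xs)"
    using assms card_independent_list[OF assms(3)]
    by (intro vec.card_ge_dim_independent) (auto simp: independent_list_def)
qed

lemma finite_lists_of_length: "finite {xs :: 'a::finite list. length xs = n}"
  using finite_lists_length_eq[of "UNIV :: 'a set" n] by simp

lemma card_subspace_diff_span:
  fixes W :: "('F::{field,finite}^'n) set"
  assumes W: "vec.subspace W" and xs: "independent_list xs" "set xs \<subseteq> W"
  shows "card (W - vec.span (set xs)) = CARD('F) ^ vec.dim W - CARD('F) ^ length xs"
proof -
  have "vec.span (set xs) \<subseteq> W" using xs W vec.span_minimal by blast
  moreover have "card (vec.span (set xs)) = CARD('F) ^ length xs"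
    using xs card_span_independent card_independent_list by (metis independent_list_def)
  ultimately show ?thesis using card_subspace[OF W] by (simp add: card_Diff_subset)
qed

lemma card_independent_extensions:
  fixes W :: "('F::{field,finite}^'n) set"
  assumes W: "vec.subspace W" and bs: "independent_list bs" "set bs \<subseteq> W"
  shows "card {cs. length cs = k \<and> set cs \<subseteq> W \<and> independent_list (bs @ cs)}
         = (\<Prod>i<k. CARD('F) ^ vec.dim W - CARD('F) ^ (length bs + i))"
proof (induction k)
  case 0
  have "{cs. length cs = 0 \<and> set cs \<subseteq> W \<and> independent_list (bs @ cs)} = {[]}" using bs by auto
  then show ?case by simp
next
  case (Suc k)
  define S where "S = {cs. length cs = k \<and> set cs \<subseteq> W \<and> independent_list (bs @ cs)}"
  define g where "g = (\<lambda>(cs, x). cs @ [x :: ('F, 'n) vec])"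
  have "{cs. length cs = Suc k \<and> set cs \<subseteq> W \<and> independent_list (bs @ cs)}
      = g ` (SIGMA cs:S. W - vec.span (set (bs @ cs)))"
  proof (rule set_eqI)
    fix ys :: "('F, 'n) vec list"
    have "length ys = Suc k \<longleftrightarrow> (\<exists>cs x. ys = cs @ [x] \<and> length cs = k)"
      by (metis length_Suc_conv_rev)
    then show "ys \<in> {cs. length cs = Suc k \<and> set cs \<subseteq> W \<and> independent_list (bs @ cs)}
        \<longleftrightarrow> ys \<in> g ` (SIGMA cs:S. W - vec.span (set (bs @ cs)))"
      by (auto simp: g_def S_def image_iff independent_list_snoc simp flip: append_assoc)
  qed
  moreover have "inj_on g (SIGMA cs:S. W - vec.span (set (bs @ cs)))"
    unfolding g_def by (rule inj_onI) auto
  moreover have "finite S"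
    by (rule finite_subset[OF _ finite_lists_of_length[of k]]) (auto simp: S_def)
  moreover have "card (W - vec.span (set (bs @ cs)))
      = CARD('F) ^ vec.dim W - CARD('F) ^ (length bs + k)" if "cs \<in> S" for cs
    using that bs card_subspace_diff_span[OF W, of "bs @ cs"] by (simp add: S_def)
  ultimately show ?case
    using Suc.IH by (simp add: card_image card_SigmaI S_def mult.commute)
qed

definition ordered_bases :: "('F::field^'n) set \<Rightarrow> ('F^'n) list set" where
  "ordered_bases H = {bs. length bs = vec.dim H \<and> set bs \<subseteq> H \<and> independent_list bs}"

lemma span_ordered_basis:
  "vec.subspace H \<Longrightarrow> bs \<in> ordered_bases H \<Longrightarrow> vec.span (set bs) = H"
  unfolding ordered_bases_def using span_independent_list_eq by blast

lemma ordered_basisI: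
  assumes "length ys = vec.dim H" "set ys \<subseteq> H" "H \<subseteq> vec.span (set ys)"
  shows "ys \<in> ordered_bases H"
proof -
  have "vec.dim H \<le> card (set ys)" using vec.dim_le_card[OF assms(3)] by simp
  then have card: "card (set ys) = length ys"
    using card_length[of ys] assms(1) by linarith
  then have "vec.independent (set ys)"
    using assms by (intro vec.card_le_dim_spanning[of _ H]) auto
  then show ?thesis
    using assms card card_distinct unfolding ordered_bases_def independent_list_def by blast
qed

lemma finite_ordered_bases: "finite (ordered_bases (H :: ('F::{field,finite}^'n) set))"
  by (rule finite_subset[OF _ finite_lists_of_length]) (auto simp: ordered_bases_def)

lemma card_ordered_bases:
  fixes H :: "('F::{field,finite}^'n) set"
  assumes "vec.subspace H"
  shows "card (ordered_bases H) = (\<Prod>i<vec.dim H. CARD('F) ^ vec.dim H - CARD('F) ^ i)"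
  using card_independent_extensions[OF assms, of "[]" "vec.dim H"]
  by (simp add: ordered_bases_def)

lemma card_ordered_bases_prefix_span:
  fixes H U :: "('F::{field,finite}^'n) set"
  assumes H: "vec.subspace H" and U: "vec.subspace U" "U \<subseteq> H"
  defines "k \<equiv> vec.dim U"
  shows "card {bs \<in> ordered_bases H. vec.span (set (take k bs)) = U}
       = (\<Prod>i<k. CARD('F) ^ k - CARD('F) ^ i) * (\<Prod>i<vec.dim H - k. CARD('F) ^ vec.dim H - CARD('F) ^ (k + i))"
proof -
  define A where "A = {xs. length xs = k \<and> set xs \<subseteq> U \<and> independent_list xs}"
  define B where
    "B = (\<lambda>xs. {ys. length ys = vec.dim H - k \<and> set ys \<subseteq> H \<and> independent_list (xs @ ys)})"
  have k_le: "k \<le> vec.dim H" using vec.dim_subset[OF U(2)] by (simp add: k_def)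
  have "{bs \<in> ordered_bases H. vec.span (set (take k bs)) = U} = (\<lambda>(xs, ys). xs @ ys) ` (SIGMA xs:A. B xs)"
  proof (intro equalityI subsetI)
    fix bs assume "bs \<in> {bs \<in> ordered_bases H. vec.span (set (take k bs)) = U}"
    then have bs: "length bs = vec.dim H" "set bs \<subseteq> H" "independent_list bs"
      and span: "vec.span (set (take k bs)) = U" by (auto simp: ordered_bases_def)
    have "take k bs \<in> A"
      using bs k_le vec.span_superset[of "set (take k bs)"] independent_list_appendD[of "take k bs" "drop k bs"]
      by (simp add: A_def span)
    moreover have "drop k bs \<in> B (take k bs)"
      using bs set_drop_subset[of k bs] by (auto simp: B_def)
    ultimately show "bs \<in> (\<lambda>(xs, ys). xs @ ys) ` (SIGMA xs:A. B xs)"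
      by (intro image_eqI[of _ _ "(take k bs, drop k bs)"]) auto
  next
    fix bs assume "bs \<in> (\<lambda>(xs, ys). xs @ ys) ` (SIGMA xs:A. B xs)"
    then obtain xs ys where bs: "bs = xs @ ys" and xs: "xs \<in> A" and ys: "ys \<in> B xs" by auto
    have "vec.span (set xs) = U"
      using xs independent_list_appendD[of xs ys] ys U(1)
      by (intro span_independent_list_eq) (auto simp: A_def B_def k_def)
    then show "bs \<in> {bs \<in> ordered_bases H. vec.span (set (take k bs)) = U}"
      using xs ys k_le U(2) by (auto simp: bs A_def B_def ordered_bases_def)
  qed
  moreover have "inj_on (\<lambda>(xs, ys). xs @ ys) (SIGMA xs:A. B xs)"
    by (clarsimp simp: inj_on_def A_def)
  moreover have "finite A" "\<And>xs. finite (B xs)"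
    by (rule finite_subset[OF _ finite_lists_of_length], force simp: A_def B_def)+
  moreover have "card (B xs) = (\<Prod>i<vec.dim H - k. CARD('F) ^ vec.dim H - CARD('F) ^ (k + i))"
    if "xs \<in> A" for xs
    using that U(2) card_independent_extensions[OF H, of xs] by (auto simp: A_def B_def)
  moreover have "card A = (\<Prod>i<k. CARD('F) ^ k - CARD('F) ^ i)"
    using card_independent_extensions[OF U(1), of "[]" k] by (simp add: A_def k_def)
  ultimately show ?thesis by (simp add: card_image card_SigmaI)
qed

section \<open>Cubic polynomials over a finite field\<close>

lemma irreducible_if_no_roots:
  fixes f :: "'F::field poly"
  assumes deg: "degree f \<in> {2, 3}" and no_root: "\<And>t. poly f t \<noteq> 0"
  shows "irreducible f"
proof (rule irreducibleI)
  show f0: "f \<noteq> 0" using deg by auto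
  then show "\<not> f dvd 1" using deg by (auto simp: is_unit_iff_degree)
  fix u v assume f: "f = u * v"
  show "u dvd 1 \<or> v dvd 1"
  proof (rule ccontr)
    assume "\<not> (u dvd 1 \<or> v dvd 1)"
    moreover have "u \<noteq> 0" "v \<noteq> 0" using f f0 by auto
    ultimately have "degree u \<noteq> 0" "degree v \<noteq> 0" "degree u + degree v \<in> {2, 3}"
      using deg f by (auto simp: is_unit_iff_degree degree_mult_eq)
    then have "degree u = 1 \<or> degree v = 1" by auto
    then obtain g h where "f = g * h" "degree g = 1" using f mult.commute by metis
    then obtain a b where "g = [:b, a:]" "a \<noteq> 0" using degree1_coeffs by metis
    then have "poly f (- b / a) = 0" using \<open>f = g * h\<close> by simp
    with no_root show False by blast
  qed
qed

lemma exists_cubic_without_roots: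
  "\<exists>f :: 'F::{field,finite} poly. degree f = 3 \<and> (\<forall>t. poly f t \<noteq> 0)"
proof -
  define monic_cubic where "monic_cubic = (\<lambda>(a::'F, b::'F, c::'F). [:c, b, a, 1:])"
  define split_cubic where "split_cubic = (\<lambda>(t::'F, d::'F, e::'F). [:- t, 1:] * [:e, d, 1:])"
  have "inj monic_cubic" unfolding monic_cubic_def by (rule injI) auto
  then have card_monic: "card (range monic_cubic) = CARD('F) ^ 3"
    by (simp add: card_image power3_eq_cube)
  \<comment> \<open>every monic cubic with a root is a value of \<open>split_cubic\<close>, which is not injective\<close>
  have collision: "split_cubic (0, -1, 0) = split_cubic (1, 0, 0)" by (simp add: split_cubic_def)
  have "range split_cubic \<subseteq> split_cubic ` (UNIV - {(0, -1, 0)})"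
  proof (rule image_subsetI)
    fix z
    show "split_cubic z \<in> split_cubic ` (UNIV - {(0, -1, 0)})"
      using collision by (cases "z = (0, -1, 0)") (auto intro: image_eqI[of _ _ "(1, 0, 0)"])
  qed
  then have "card (range split_cubic) \<le> card (split_cubic ` (UNIV - {(0, -1, 0)}))"
    by (intro card_mono) simp_all
  also have "\<dots> \<le> card (UNIV - {(0::'F, -1::'F, 0::'F)})" by (rule card_image_le) simp
  also have "\<dots> = CARD('F) ^ 3 - 1"
    by (simp add: card_Diff_singleton card_cartesian_product power3_eq_cube)
  also have "\<dots> < card (range monic_cubic)" by (simp add: card_monic)
  finally have "\<not> range monic_cubic \<subseteq> range split_cubic"
    using card_mono[of "range split_cubic" "range monic_cubic"] by (meson finite finite_imageI leD)
  then obtain a b c where not_split: "[:c, b, a, 1:] \<notin> range split_cubic"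
    by (auto simp: monic_cubic_def)
  define f where "f = [:c, b, a, 1:]"
  have deg_f: "degree f = 3" and lead_f: "lead_coeff f = 1"
    by (simp_all add: f_def numeral_3_eq_3)
  have "poly f t \<noteq> 0" for t
  proof
    assume "poly f t = 0"
    then obtain g where g: "f = [:- t, 1:] * g"
      unfolding poly_eq_0_iff_dvd by (elim dvdE)
    then have "g \<noteq> 0" using deg_f by auto
    then have "degree g = 2" using degree_mult_eq[of "[:- t, 1:]" g] g deg_f by simp
    moreover have "lead_coeff g = 1"
      using lead_f g lead_coeff_mult[of "[:- t, 1:]" g] by simp
    ultimately have "g = [:coeff g 0, coeff g 1, 1:]"
      by (intro poly_eqI) (auto simp: coeff_pCons coeff_eq_0 numeral_2_eq_2 split: nat.split)
    then have "f = split_cubic (t, coeff g 1, coeff g 0)"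
      using g unfolding split_cubic_def by (metis case_prod_conv)
    with not_split show False by (simp add: f_def)
  qed
  with deg_f show ?thesis by blast
qed

lemma exists_irreducible_cubic:
  "\<exists>f :: 'F::{field,finite} poly. degree f = 3 \<and> irreducible f"
  using exists_cubic_without_roots irreducible_if_no_roots by fastforce

text \<open>The matrix of multiplication by \<open>a\<close> on \<open>F[X]/(f)\<close> in the monomial basis.\<close>

definition mult_matrix :: "'F::field poly \<Rightarrow> 'F poly \<Rightarrow> nat \<Rightarrow> nat \<Rightarrow> 'F" where
  "mult_matrix f a i k = coeff ((a * monom 1 i) mod f) k"

lemma coeff_mult_mod:
  fixes f a :: "'F::field poly"
  shows "coeff ((a * [:x0, x1, x2:]) mod f) k
           = x0 * mult_matrix f a 0 k + x1 * mult_matrix f a 1 k + x2 * mult_matrix f a 2 k"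
proof -
  have "[:x0, x1, x2:] = smult x0 (monom 1 0) + smult x1 (monom 1 1) + smult x2 (monom 1 2)"
    by (rule poly_eqI) (simp add: coeff_pCons coeff_monom split: nat.split)
  then have "a * [:x0, x1, x2:]
      = smult x0 (a * monom 1 0) + smult x1 (a * monom 1 1) + smult x2 (a * monom 1 2)"
    by (simp add: algebra_simps)
  then show ?thesis by (simp add: mult_matrix_def poly_mod_add_left mod_smult_left)
qed

text \<open>\<open>F[X]/(f)\<close> is a field, so \<open>(a - a') x \<equiv> 0\<close> forces \<open>x \<equiv> 0\<close>.\<close>

lemma mult_matrix_diff_nonsingular:
  fixes f a a' :: "'F::field poly"
  assumes f: "degree f = 3" "irreducible f"
    and a: "degree a < 3" "degree a' < 3" "a \<noteq> a'"
    and eq: "\<forall>k<3. x0 * mult_matrix f a 0 k + x1 * mult_matrix f a 1 k + x2 * mult_matrix f a 2 k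
                  = x0 * mult_matrix f a' 0 k + x1 * mult_matrix f a' 1 k + x2 * mult_matrix f a' 2 k"
  shows "x0 = 0 \<and> x1 = 0 \<and> x2 = 0"
proof -
  define x where "x = [:x0, x1, x2:]"
  have f0: "f \<noteq> 0" using f by auto
  have "(a * x) mod f = (a' * x) mod f"
  proof (rule poly_eqI)
    fix k
    show "coeff ((a * x) mod f) k = coeff ((a' * x) mod f) k"
    proof (cases "k < 3")
      case True
      then show ?thesis using eq unfolding x_def coeff_mult_mod by blast
    next
      case False
      have "degree ((b * x) mod f) < k" for b
        using degree_mod_less[OF f0, of "b * x"] f(1) False by (cases "(b * x) mod f = 0") auto
      then show ?thesis by (simp add: coeff_eq_0)
    qed
  qed
  then have "f dvd (a - a') * x" by (simp add: mod_eq_dvd_iff left_diff_distrib)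
  moreover have "\<not> f dvd (a - a')"
    using dvd_imp_degree_le[of f "a - a'"] degree_diff_le_max[of a a'] a f by auto
  ultimately have "f dvd x"
    using prime_elem_dvd_mult_iff[OF field_poly_irreducible_imp_prime[OF f(2)]] by blast
  moreover have "degree x < 3" by (simp add: x_def)
  ultimately have "x = 0" using dvd_imp_degree_le[of f x] f by force
  then show ?thesis by (simp add: x_def)
qed

section \<open>A spread of planes in a 6-space\<close>

lemma list_length_6E:
  assumes "length bs = 6"
  obtains b0 b1 b2 b3 b4 b5 where "bs = [b0, b1, b2, b3, b4, b5]"
  using assms by (auto simp: numeral_eq_Suc length_Suc_conv)

lemma span_3: "vec.span {u0, u1, u2} = {x0 *s u0 + x1 *s u1 + x2 *s u2 | x0 x1 x2. True}"
proof (intro equalityI subsetI)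
  fix v assume "v \<in> vec.span {u0, u1, u2}"
  then obtain x0 x1 x2 where "v - x0 *s u0 - x1 *s u1 - x2 *s u2 \<in> vec.span {}"
    by (auto simp: vec.span_insert[of _ "{_, _}"] vec.span_insert[of _ "{_}"] vec.span_insert[of _ "{}"]
        simp del: vec.span_empty)
  then have "v = x0 *s u0 + x1 *s u1 + x2 *s u2" by (simp add: vec.span_empty algebra_simps)
  then show "v \<in> {x0 *s u0 + x1 *s u1 + x2 *s u2 | x0 x1 x2. True}" by blast
qed (auto simp: vec.span_add vec.span_scale vec.span_base)

lemma independent_list_6_coeffs_eq_0:
  assumes "independent_list [b0, b1, b2, b3, b4, b5 :: 'F::field^'n]"
    and "c0 *s b0 + c1 *s b1 + c2 *s b2 + c3 *s b3 + c4 *s b4 + c5 *s b5 = 0"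
  shows "c0 = 0 \<and> c1 = 0 \<and> c2 = 0 \<and> c3 = 0 \<and> c4 = 0 \<and> c5 = 0"
proof -
  have distinct: "distinct [b0, b1, b2, b3, b4, b5]"
    and indep: "vec.independent {b0, b1, b2, b3, b4, b5}"
    using assms(1) by (auto simp: independent_list_def)
  define u where "u = (\<lambda>v. if v = b0 then c0 else if v = b1 then c1 else if v = b2 then c2
     else if v = b3 then c3 else if v = b4 then c4 else c5)"
  have "(\<Sum>v\<in>{b0, b1, b2, b3, b4, b5}. u v *s v)
      = c0 *s b0 + c1 *s b1 + c2 *s b2 + c3 *s b3 + c4 *s b4 + c5 *s b5"
    using distinct by (auto simp: u_def algebra_simps)
  then have "\<forall>v\<in>{b0, b1, b2, b3, b4, b5}. u v = 0"
    using indep assms(2) unfolding vec.independent_explicit by auto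
  then show ?thesis using distinct by (auto simp: u_def split: if_splits)
qed

text \<open>In coordinates \<open>(x, y) \<in> F\<^sup>3 \<times> F\<^sup>3\<close> with respect to an ordered basis, the leading
  plane of \<open>shear M bs\<close> is the graph \<open>y = x M\<close>, and that of \<open>swap_halves bs\<close> is \<open>x = 0\<close>.\<close>

definition shear :: "(nat \<Rightarrow> nat \<Rightarrow> 'F::field) \<Rightarrow> ('F^'n) list \<Rightarrow> ('F^'n) list" where
  "shear M bs = [bs!0 + M 0 0 *s bs!3 + M 0 1 *s bs!4 + M 0 2 *s bs!5,
                 bs!1 + M 1 0 *s bs!3 + M 1 1 *s bs!4 + M 1 2 *s bs!5,
                 bs!2 + M 2 0 *s bs!3 + M 2 1 *s bs!4 + M 2 2 *s bs!5,
                 bs!3, bs!4, bs!5]"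

definition swap_halves :: "'a list \<Rightarrow> 'a list" where
  "swap_halves xs = drop 3 xs @ take 3 xs"

definition plane_of :: "('F::field^'n) list \<Rightarrow> ('F^'n) set" where
  "plane_of bs = vec.span (set (take 3 bs))"

lemma length_shear [simp]: "length (shear M bs) = 6"
  by (simp add: shear_def)

lemma set_shear_subset_span: "length bs = 6 \<Longrightarrow> set (shear M bs) \<subseteq> vec.span (set bs)"
  by (elim list_length_6E) (simp add: shear_def vec.span_add vec.span_scale vec.span_base)

lemma shear_shear_uminus: "length bs = 6 \<Longrightarrow> shear (\<lambda>i k. - M i k) (shear M bs) = bs"
  by (elim list_length_6E) (simp add: shear_def vec.scale_minus_left)

lemma shear_in_ordered_bases:
  assumes H: "vec.subspace H" "vec.dim H = 6" and bs: "bs \<in> ordered_bases H"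
  shows "shear M bs \<in> ordered_bases H"
proof (rule ordered_basisI)
  have length: "length bs = 6" using bs H by (simp add: ordered_bases_def)
  show "length (shear M bs) = vec.dim H" using H by simp
  show "set (shear M bs) \<subseteq> H"
    using set_shear_subset_span[OF length] span_ordered_basis[OF H(1) bs] by simp
  have "set bs \<subseteq> vec.span (set (shear M bs))"
    using set_shear_subset_span[of "shear M bs" "\<lambda>i k. - M i k"] shear_shear_uminus[OF length]
    by simp
  then show "H \<subseteq> vec.span (set (shear M bs))"
    using span_ordered_basis[OF H(1) bs] vec.span_mono vec.span_span by metis
qed

lemma bij_betw_shear:
  assumes "vec.subspace H" "vec.dim H = 6"
  shows "bij_betw (shear M) (ordered_bases H) (ordered_bases H)"
proof (rule bij_betw_byWitness[where f' = "shear (\<lambda>i k. - M i k)"])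
  show "\<forall>bs\<in>ordered_bases H. shear (\<lambda>i k. - M i k) (shear M bs) = bs"
    "\<forall>bs\<in>ordered_bases H. shear M (shear (\<lambda>i k. - M i k) bs) = bs"
    using assms shear_shear_uminus[of _ M] shear_shear_uminus[of _ "\<lambda>i k. - M i k"]
    by (auto simp: ordered_bases_def)
qed (use shear_in_ordered_bases[OF assms] in blast)+

lemma bij_betw_swap_halves:
  assumes "vec.dim H = 6"
  shows "bij_betw swap_halves (ordered_bases H) (ordered_bases H)"
proof -
  have "swap_halves (swap_halves bs) = bs" "swap_halves bs \<in> ordered_bases H"
    if "bs \<in> ordered_bases H" for bs
    using that assms
    by (auto simp: ordered_bases_def independent_list_def swap_halves_def elim!: list_length_6E)
  then show ?thesis by (intro bij_betw_byWitness[where f' = swap_halves]) auto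
qed

lemma plane_of_shear_memE:
  assumes "v \<in> plane_of (shear M [b0, b1, b2, b3, b4, b5])"
  obtains x0 x1 x2 where "v = x0 *s (b0 + M 0 0 *s b3 + M 0 1 *s b4 + M 0 2 *s b5)
       + x1 *s (b1 + M 1 0 *s b3 + M 1 1 *s b4 + M 1 2 *s b5)
       + x2 *s (b2 + M 2 0 *s b3 + M 2 1 *s b4 + M 2 2 *s b5)"
proof -
  have set_eq: "set (take 3 (shear M [b0, b1, b2, b3, b4, b5]))
      = {b0 + M 0 0 *s b3 + M 0 1 *s b4 + M 0 2 *s b5, b1 + M 1 0 *s b3 + M 1 1 *s b4 + M 1 2 *s b5,
         b2 + M 2 0 *s b3 + M 2 1 *s b4 + M 2 2 *s b5}"
    by (simp add: shear_def)
  show ?thesis using assms that unfolding plane_of_def set_eq span_3 by blast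
qed

lemma plane_of_shear_Int_swap_halves:
  assumes "independent_list bs" "length bs = 6"
  shows "plane_of (shear M bs) \<inter> plane_of (swap_halves bs) = {0}"
proof -
  obtain b0 b1 b2 b3 b4 b5 where bs: "bs = [b0, b1, b2, b3, b4, b5]"
    using assms(2) by (rule list_length_6E)
  have "v = 0" if v1: "v \<in> plane_of (shear M bs)" and v2: "v \<in> plane_of (swap_halves bs)" for v
  proof -
    obtain x0 x1 x2 where x: "v = x0 *s (b0 + M 0 0 *s b3 + M 0 1 *s b4 + M 0 2 *s b5)
       + x1 *s (b1 + M 1 0 *s b3 + M 1 1 *s b4 + M 1 2 *s b5)
       + x2 *s (b2 + M 2 0 *s b3 + M 2 1 *s b4 + M 2 2 *s b5)"
      using v1 unfolding bs by (rule plane_of_shear_memE)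
    obtain y0 y1 y2 where y: "v = y0 *s b3 + y1 *s b4 + y2 *s b5"
      using v2 unfolding plane_of_def bs swap_halves_def by (auto simp: span_3)
    have "x0 *s b0 + x1 *s b1 + x2 *s b2
      + (x0 * M 0 0 + x1 * M 1 0 + x2 * M 2 0 - y0) *s b3
      + (x0 * M 0 1 + x1 * M 1 1 + x2 * M 2 1 - y1) *s b4
      + (x0 * M 0 2 + x1 * M 1 2 + x2 * M 2 2 - y2) *s b5 = v - v"
      by (subst (2) y, subst x) (simp add: vec_eq_iff algebra_simps)
    then have "x0 = 0 \<and> x1 = 0 \<and> x2 = 0"
      using independent_list_6_coeffs_eq_0 assms(1) unfolding bs diff_self by blast
    then show "v = 0" using x by simp
  qed
  then show ?thesis by (auto simp: plane_of_def vec.span_zero)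
qed

lemma plane_of_shear_Int_shear:
  assumes "independent_list bs" "length bs = 6"
    and nonsingular: "\<And>x0 x1 x2. \<forall>k<3. x0 * M 0 k + x1 * M 1 k + x2 * M 2 k
                                       = x0 * M' 0 k + x1 * M' 1 k + x2 * M' 2 k
                                 \<Longrightarrow> x0 = 0 \<and> x1 = 0 \<and> x2 = 0"
  shows "plane_of (shear M bs) \<inter> plane_of (shear M' bs) = {0}"
proof -
  obtain b0 b1 b2 b3 b4 b5 where bs: "bs = [b0, b1, b2, b3, b4, b5]"
    using assms(2) by (rule list_length_6E)
  have "v = 0" if v1: "v \<in> plane_of (shear M bs)" and v2: "v \<in> plane_of (shear M' bs)" for v
  proof -
    obtain x0 x1 x2 where x: "v = x0 *s (b0 + M 0 0 *s b3 + M 0 1 *s b4 + M 0 2 *s b5)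
       + x1 *s (b1 + M 1 0 *s b3 + M 1 1 *s b4 + M 1 2 *s b5)
       + x2 *s (b2 + M 2 0 *s b3 + M 2 1 *s b4 + M 2 2 *s b5)"
      using v1 unfolding bs by (rule plane_of_shear_memE)
    obtain y0 y1 y2 where y: "v = y0 *s (b0 + M' 0 0 *s b3 + M' 0 1 *s b4 + M' 0 2 *s b5)
       + y1 *s (b1 + M' 1 0 *s b3 + M' 1 1 *s b4 + M' 1 2 *s b5)
       + y2 *s (b2 + M' 2 0 *s b3 + M' 2 1 *s b4 + M' 2 2 *s b5)"
      using v2 unfolding bs by (rule plane_of_shear_memE)
    define d where
      "d k = x0 * M 0 k + x1 * M 1 k + x2 * M 2 k - (y0 * M' 0 k + y1 * M' 1 k + y2 * M' 2 k)" for k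
    have "(x0 - y0) *s b0 + (x1 - y1) *s b1 + (x2 - y2) *s b2 + d 0 *s b3 + d 1 *s b4 + d 2 *s b5
        = v - v"
      by (subst (2) y, subst x) (simp add: d_def vec_eq_iff algebra_simps)
    then have "x0 = y0" "x1 = y1" "x2 = y2" and d: "d 0 = 0" "d 1 = 0" "d 2 = 0"
      using independent_list_6_coeffs_eq_0 assms(1) unfolding bs diff_self by (metis eq_iff_diff_eq_0)+
    then have "\<forall>k<3. x0 * M 0 k + x1 * M 1 k + x2 * M 2 k = x0 * M' 0 k + x1 * M' 1 k + x2 * M' 2 k"
      by (auto simp: d_def less_Suc_eq numeral_3_eq_3 numeral_2_eq_2)
    then have "x0 = 0 \<and> x1 = 0 \<and> x2 = 0" by (rule nonsingular)
    then show "v = 0" using x by simp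
  qed
  then show ?thesis by (auto simp: plane_of_def vec.span_zero)
qed

text \<open>For an irreducible cubic \<open>f\<close>, the planes \<open>x = 0\<close> and \<open>y = x M\<^sub>a\<close>, where \<open>M\<^sub>a\<close> runs
  through the multiplication matrices of the \<open>q\<^sup>3\<close> residues \<open>a\<close> modulo \<open>f\<close>, form a spread:
  \<open>q\<^sup>3 + 1\<close> pairwise disjoint planes.  The index \<open>None\<close> stands for \<open>x = 0\<close>.\<close>

definition spread_index :: "'F::field poly option set" where
  "spread_index = insert None (Some ` {a. degree a < 3})"

definition spread_map :: "'F::field poly \<Rightarrow> 'F poly option \<Rightarrow> ('F^'n) list \<Rightarrow> ('F^'n) list" where
  "spread_map f j = (case j of None \<Rightarrow> swap_halves | Some a \<Rightarrow> shear (mult_matrix f a))"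

lemma card_polys_degree_less_3: "card {a :: 'F::{field,finite} poly. degree a < 3} = CARD('F) ^ 3"
proof -
  define g where "g = (\<lambda>(a::'F, b::'F, c::'F). [:a, b, c:])"
  have "inj g" unfolding g_def by (rule injI) auto
  moreover have "{a. degree a < 3} = range g"
  proof (intro equalityI subsetI)
    fix p :: "'F poly" assume "p \<in> {a. degree a < 3}"
    then have "p = [:coeff p 0, coeff p 1, coeff p 2:]"
      by (intro poly_eqI) (auto simp: coeff_pCons coeff_eq_0 numeral_2_eq_2 split: nat.split)
    then show "p \<in> range g" by (metis g_def case_prod_conv rangeI)
  qed (auto simp: g_def)
  ultimately show ?thesis by (simp add: card_image power3_eq_cube)
qed

lemma finite_spread_index: "finite (spread_index :: 'F::{field,finite} poly option set)"
  using card_polys_degree_less_3[where 'F = 'F]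
  by (simp add: spread_index_def card_ge_0_finite)

lemma card_spread_index: "card (spread_index :: 'F::{field,finite} poly option set) = CARD('F) ^ 3 + 1"
  using finite_spread_index[where 'F = 'F] card_polys_degree_less_3[where 'F = 'F]
  by (simp add: spread_index_def card_image)

lemma bij_betw_spread_map:
  assumes "vec.subspace H" "vec.dim H = 6"
  shows "bij_betw (spread_map f j) (ordered_bases H) (ordered_bases H)"
  using bij_betw_swap_halves bij_betw_shear assms
  by (cases j) (simp_all add: spread_map_def)

lemma spread_map_planes_disjoint:
  fixes f :: "'F::field poly"
  assumes f: "degree f = 3" "irreducible f" and bs: "independent_list bs" "length bs = 6"
    and j: "j1 \<in> spread_index" "j2 \<in> spread_index" "j1 \<noteq> j2"
  shows "plane_of (spread_map f j1 bs) \<inter> plane_of (spread_map f j2 bs) = {0}"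
proof (cases j1)
  case None
  with j obtain a where "j2 = Some a" by (cases j2) auto
  then show ?thesis
    using None plane_of_shear_Int_swap_halves[OF bs] by (simp add: spread_map_def Int_commute)
next
  case (Some a)
  show ?thesis
  proof (cases j2)
    case None
    then show ?thesis using Some plane_of_shear_Int_swap_halves[OF bs] by (simp add: spread_map_def)
  next
    case (Some a')
    then have "degree a < 3" "degree a' < 3" "a \<noteq> a'"
      using j \<open>j1 = Some a\<close> by (auto simp: spread_index_def)
    then show ?thesis
      using \<open>j1 = Some a\<close> Some plane_of_shear_Int_shear[OF bs] mult_matrix_diff_nonsingular[OF f]
      by (simp add: spread_map_def)
  qed
qed

section \<open>The Erdos-Ko-Rado bound for planes in a 6-space\<close>

lemma gauss_5_2_eq:
  assumes "q \<ge> 2"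
  shows "gauss_5_2 q = (q^4 + q^3 + q^2 + q + 1) * (q^2 + 1)"
proof -
  have pow: "int (q ^ n - 1) = int q ^ n - 1" for n
    using assms by (simp add: of_nat_diff)
  have sub: "int (q - 1) = int q - 1" using assms by (simp add: of_nat_diff)
  have "int ((q^5 - 1) * (q^4 - 1)) = int (((q^2 - 1) * (q - 1)) * ((q^4 + q^3 + q^2 + q + 1) * (q^2 + 1)))"
    unfolding of_nat_mult of_nat_add pow sub by (simp only: of_nat_power of_nat_1 of_nat_numeral) algebra
  then have "(q^5 - 1) * (q^4 - 1) = ((q^2 - 1) * (q - 1)) * ((q^4 + q^3 + q^2 + q + 1) * (q^2 + 1))"
    by (simp only: of_nat_eq_iff)
  moreover have "(q^2 - 1) * (q - 1) \<noteq> 0"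
    using assms power_increasing[of 1 2 q] by simp
  ultimately show ?thesis by (simp add: gauss_5_2_def)
qed

lemma prod_pow_diff_6_eq:
  fixes q :: nat
  assumes "q \<ge> 2"
  shows "(\<Prod>i<6. q ^ 6 - q ^ i) = (q^3 + 1) * ((q^4 + q^3 + q^2 + q + 1) * (q^2 + 1))
           * ((\<Prod>i<3. q ^ 3 - q ^ i) * (\<Prod>i<3. q ^ 6 - q ^ (3 + i)))"
proof -
  have lift: "int (\<Prod>i<m. q ^ n - q ^ (k + i)) = (\<Prod>i<m. int q ^ n - int q ^ (k + i))"
    if "k + m \<le> n" for k m n
    unfolding of_nat_prod
  proof (rule prod.cong)
    fix i assume "i \<in> {..<m}"
    then have "q ^ (k + i) \<le> q ^ n" using that assms by (intro power_increasing) auto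
    then show "int (q ^ n - q ^ (k + i)) = int q ^ n - int q ^ (k + i)" by (simp add: of_nat_diff)
  qed simp
  define Q where "Q = int q"
  have "int (\<Prod>i<6. q ^ 6 - q ^ i) = (\<Prod>i<6. Q ^ 6 - Q ^ i)"
    using lift[of 0 6 6] by (simp add: Q_def)
  also have "\<dots> = (Q^3 + 1) * ((Q^4 + Q^3 + Q^2 + Q + 1) * (Q^2 + 1))
           * ((\<Prod>i<3. Q ^ 3 - Q ^ (0 + i)) * (\<Prod>i<3. Q ^ 6 - Q ^ (3 + i)))"
    by (simp add: eval_nat_numeral) algebra
  also have "\<dots> = int ((q^3 + 1) * ((q^4 + q^3 + q^2 + q + 1) * (q^2 + 1))
           * ((\<Prod>i<3. q ^ 3 - q ^ (0 + i)) * (\<Prod>i<3. q ^ 6 - q ^ (3 + i))))"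
    using lift[of 0 3 3] lift[of 3 3 6] by (simp only: Q_def of_nat_mult of_nat_add of_nat_power of_nat_1 of_nat_numeral)
  finally show ?thesis by (simp only: of_nat_eq_iff add_0)
qed

lemma card_ordered_bases_dim_6:
  fixes H :: "('F::{field,finite}^'n) set"
  assumes "vec.subspace H" "vec.dim H = 6"
  shows "card (ordered_bases H) = (CARD('F)^3 + 1) * gauss_5_2 CARD('F)
           * ((\<Prod>i<3. CARD('F) ^ 3 - CARD('F) ^ i) * (\<Prod>i<3. CARD('F) ^ 6 - CARD('F) ^ (3 + i)))"
proof -
  have "card (ordered_bases H) = (\<Prod>i<6. CARD('F) ^ 6 - CARD('F) ^ i)"
    using card_ordered_bases[OF assms(1)] assms(2) by simp
  then show ?thesis
    unfolding prod_pow_diff_6_eq[OF card_field_ge_2] gauss_5_2_eq[OF card_field_ge_2]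
    by (simp only: mult.assoc)
qed

lemma card_ordered_bases_plane_of_eq:
  fixes H U :: "('F::{field,finite}^'n) set"
  assumes "vec.subspace H" "vec.dim H = 6" "vec.subspace U" "vec.dim U = 3" "U \<subseteq> H"
  shows "card {bs \<in> ordered_bases H. plane_of bs = U}
           = (\<Prod>i<3. CARD('F) ^ 3 - CARD('F) ^ i) * (\<Prod>i<3. CARD('F) ^ 6 - CARD('F) ^ (3 + i))"
  using card_ordered_bases_prefix_span[OF assms(1,3,5)] assms(2,4) by (simp add: plane_of_def)

theorem card_intersecting_planes_le:
  fixes H :: "('F::{field,finite}^'n) set" and I :: "('F^'n) set set"
  assumes H: "vec.subspace H" "vec.dim H = 6"
    and planes: "\<And>U. U \<in> I \<Longrightarrow> vec.subspace U \<and> vec.dim U = 3 \<and> U \<subseteq> H"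
    and intersecting: "\<And>U V. U \<in> I \<Longrightarrow> V \<in> I \<Longrightarrow> U \<inter> V \<noteq> {0}"
  shows "card I \<le> gauss_5_2 CARD('F)"
proof -
  define q where "q = CARD('F)"
  define c where "c = (\<Prod>i<3. q ^ 3 - q ^ i) * (\<Prod>i<3. q ^ 6 - q ^ (3 + i))"
  obtain f :: "'F poly" where f: "degree f = 3" "irreducible f"
    using exists_irreducible_cubic by blast
  have "card (spread_index :: 'F poly option set) * card {bs \<in> ordered_bases H. plane_of bs \<in> I}
      \<le> card (ordered_bases H)"
  proof (rule card_mult_le_by_averaging[OF finite_ordered_bases finite_spread_index])
    show "bij_betw (spread_map f j) (ordered_bases H) (ordered_bases H)" for j
      by (rule bij_betw_spread_map[OF H])
    fix bs j j' assume "bs \<in> ordered_bases H" "j \<in> spread_index" "j' \<in> spread_index"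
      and "plane_of (spread_map f j bs) \<in> I" "plane_of (spread_map f j' bs) \<in> I"
    then show "j = j'"
      using spread_map_planes_disjoint[OF f, of bs j j'] intersecting H
      by (auto simp: ordered_bases_def)
  qed
  moreover have "card {bs \<in> ordered_bases H. plane_of bs \<in> I} = card I * c"
    using card_ordered_bases_plane_of_eq[OF H] planes
    by (intro card_filter_mem_eq_mult[OF finite_ordered_bases]) (simp_all add: c_def q_def)
  moreover have "card (ordered_bases H) = (q^3 + 1) * (gauss_5_2 q * c)"
    using card_ordered_bases_dim_6[OF H] unfolding q_def c_def by (simp only: mult.assoc)
  ultimately have "(q^3 + 1) * (card I * c) \<le> (q^3 + 1) * (gauss_5_2 q * c)"
    by (simp add: card_spread_index q_def)
  moreover have "c > 0"
    using card_field_ge_2[where 'F = 'F] power_strict_increasing[of _ _ q]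
    by (auto simp: c_def q_def intro!: prod_pos)
  ultimately have "card I \<le> gauss_5_2 q" by (simp only: mult_le_cancel1 mult_le_cancel2)
  then show ?thesis by (simp add: q_def)
qed

section \<open>Solids through a point\<close>

lemma subspace_coordinate_hyperplane: "vec.subspace {x :: 'F::field^'n. x $ i = 0}"
  by (rule vec.subspaceI) auto

lemma dim_Int_coordinate_hyperplane:
  fixes S :: "('F::field^'n) set"
  assumes S: "vec.subspace S" "p \<in> S" and p: "p $ i \<noteq> 0"
  shows "vec.dim (S \<inter> {x. x $ i = 0}) + 1 = vec.dim S"
proof -
  define H where "H = {x :: 'F^'n. x $ i = 0}"
  have sum: "{x + y | x y. x \<in> S \<inter> H \<and> y \<in> vec.span {p}} = S"
  proof (intro equalityI subsetI)
    fix z assume "z \<in> S"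
    then have "z - (z $ i / p $ i) *s p \<in> S \<inter> H" "(z $ i / p $ i) *s p \<in> vec.span {p}"
      using S p by (auto simp: H_def vec.subspace_diff vec.subspace_scale vec.span_scale vec.span_base)
    then show "z \<in> {x + y | x y. x \<in> S \<inter> H \<and> y \<in> vec.span {p}}" by force
  qed (use S vec.span_minimal[of "{p}" S] vec.subspace_add in blast)
  have "vec.dim ((S \<inter> H) \<inter> vec.span {p}) = 0"
    using p by (auto simp: H_def vec.span_singleton)
  moreover have "vec.dim (vec.span {p}) = 1" using p by (metis vec.dim_span vec.dim_singleton zero_index)
  moreover have "vec.dim {x + y | x y. x \<in> S \<inter> H \<and> y \<in> vec.span {p}}
      + vec.dim ((S \<inter> H) \<inter> vec.span {p})
      = vec.dim (S \<inter> H) + vec.dim (vec.span {p})"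
    by (rule vec.dim_sums_Int[OF vec.subspace_inter[OF S(1)] vec.subspace_span])
      (simp add: H_def subspace_coordinate_hyperplane)
  ultimately show ?thesis unfolding H_def[symmetric] sum by linarith
qed

lemma Int_coordinate_hyperplane_eq_imp_eq:
  fixes S S' :: "('F::field^'n) set"
  assumes "vec.subspace S" "vec.subspace S'" "p \<in> S" "p \<in> S'" "p $ i \<noteq> 0"
    and eq: "S \<inter> {x. x $ i = 0} = S' \<inter> {x. x $ i = 0}"
  shows "S = S'"
proof -
  have "S\<^sub>1 \<subseteq> S\<^sub>2"
    if S\<^sub>1: "vec.subspace S\<^sub>1" "p \<in> S\<^sub>1" and S\<^sub>2: "vec.subspace S\<^sub>2" "p \<in> S\<^sub>2"
      and eq: "S\<^sub>1 \<inter> {x. x $ i = 0} = S\<^sub>2 \<inter> {x. x $ i = 0}" for S\<^sub>1 S\<^sub>2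
  proof
    fix x assume "x \<in> S\<^sub>1"
    then have "x - (x $ i / p $ i) *s p \<in> S\<^sub>1 \<inter> {x. x $ i = 0}"
      using vec.subspace_diff[OF S\<^sub>1(1) _ vec.subspace_scale[OF S\<^sub>1]] assms(5) by simp
    then have "x - (x $ i / p $ i) *s p \<in> S\<^sub>2" using eq by blast
    then have "x - (x $ i / p $ i) *s p + (x $ i / p $ i) *s p \<in> S\<^sub>2"
      by (rule vec.subspace_add[OF S\<^sub>2(1) _ vec.subspace_scale[OF S\<^sub>2]])
    then show "x \<in> S\<^sub>2" by simp
  qed
  from this[OF assms(1,3,2,4) eq] this[OF assms(2,4,1,3) eq[symmetric]] show ?thesis
    by (rule subset_antisym)
qed

lemma coordinate_hyperplane_sections_meet:
  fixes S S' :: "('F::field^'n) set"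
  assumes "vec.subspace S" "vec.subspace S'" "p \<in> S" "p \<in> S'" "p $ i \<noteq> 0"
    and "v \<in> S \<inter> S'" "v \<notin> vec.span {p}"
  shows "(S \<inter> {x. x $ i = 0}) \<inter> (S' \<inter> {x. x $ i = 0}) \<noteq> {0}"
proof -
  define h where "h = v - (v $ i / p $ i) *s p"
  have "h \<in> S" "h \<in> S'"
    using assms(6) vec.subspace_diff[OF assms(1) _ vec.subspace_scale[OF assms(1,3)]]
      vec.subspace_diff[OF assms(2) _ vec.subspace_scale[OF assms(2,4)]]
    by (auto simp: h_def)
  moreover have "h $ i = 0" using assms(5) by (simp add: h_def)
  moreover have "h \<noteq> 0"
  proof
    assume "h = 0"
    then have "v = (v $ i / p $ i) *s p" by (simp add: h_def)
    then show False using assms(7) by (metis vec.span_base vec.span_scale singletonI)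
  qed
  ultimately have "h \<in> (S \<inter> {x. x $ i = 0}) \<inter> (S' \<inter> {x. x $ i = 0}) - {0}" by simp
  then show ?thesis by blast
qed

theorem card_solids_through_point_le:
  fixes \<S> :: "'F::{field,finite} pt7 set set" and p :: "'F pt7"
  assumes "p \<noteq> 0"
    and solids: "\<And>S. S \<in> \<S> \<Longrightarrow> pg_solid S \<and> p \<in> S"
    and meet: "\<And>S S'. S \<in> \<S> \<Longrightarrow> S' \<in> \<S> \<Longrightarrow> S \<noteq> S'
                 \<Longrightarrow> \<not> S \<inter> S' \<subseteq> vec.span {p}"
  shows "card \<S> \<le> gauss_5_2 CARD('F)"
proof -
  obtain i where p: "p $ i \<noteq> 0" using assms(1) by (metis vec_eq_iff zero_index)
  define H where "H = {x :: 'F pt7. x $ i = 0}"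
  have S: "vec.subspace S" "vec.dim S = 4" "p \<in> S" if "S \<in> \<S>" for S
    using solids[OF that] by (auto simp: pg_solid_def)
  have H: "vec.subspace H" "vec.dim H = 6"
    using dim_Int_coordinate_hyperplane[OF vec.subspace_UNIV _ p]
    by (simp_all add: H_def subspace_coordinate_hyperplane card_cart_basis)
  have plane_section: "vec.subspace (S \<inter> H) \<and> vec.dim (S \<inter> H) = 3 \<and> S \<inter> H \<subseteq> H"
    if "S \<in> \<S>" for S
    using dim_Int_coordinate_hyperplane[OF S(1,3)[OF that] p] S(1,2)[OF that] H(1)
    by (simp add: H_def vec.subspace_inter)
  have "inj_on (\<lambda>S. S \<inter> H) \<S>"
    using Int_coordinate_hyperplane_eq_imp_eq[OF S(1) S(1) S(3) S(3) p]
    by (auto simp: inj_on_def H_def)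
  moreover have "card ((\<lambda>S. S \<inter> H) ` \<S>) \<le> gauss_5_2 CARD('F)"
  proof (rule card_intersecting_planes_le[OF H])
    show "vec.subspace U \<and> vec.dim U = 3 \<and> U \<subseteq> H" if "U \<in> (\<lambda>S. S \<inter> H) ` \<S>" for U
      using that plane_section by blast
    fix U V assume "U \<in> (\<lambda>S. S \<inter> H) ` \<S>" "V \<in> (\<lambda>S. S \<inter> H) ` \<S>"
    then obtain S S' where SS': "S \<in> \<S>" "S' \<in> \<S>" and UV: "U = S \<inter> H" "V = S' \<inter> H" by blast
    show "U \<inter> V \<noteq> {0}"
    proof (cases "S = S'")
      case True
      then show ?thesis
        using plane_section[OF SS'(1)] UV by (metis inf.idem vec.dim_eq_0 zero_neq_numeral subset_refl)
    next
      case False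
      then obtain v where "v \<in> S \<inter> S'" "v \<notin> vec.span {p}" using meet[OF SS'] by blast
      then show ?thesis
        using coordinate_hyperplane_sections_meet[OF S(1)[OF SS'(1)] S(1)[OF SS'(2)]
            S(3)[OF SS'(1)] S(3)[OF SS'(2)] p]
        by (simp add: UV H_def)
    qed
  qed
  ultimately show ?thesis by (simp add: card_image)
qed

lemma pg_flag23D:
  assumes "pg_flag23 (E, S)"
  shows "vec.subspace E" "vec.dim E = 3" "vec.subspace S" "vec.dim S = 4" "E \<subseteq> S"
  using assms by (simp_all add: pg_flag23_def pg_plane_def pg_solid_def)

lemma dim_add_dim_Int_le:
  fixes E E' S' :: "('F::field^'n) set"
  assumes "vec.subspace E'" "vec.subspace S'" "E' \<subseteq> S'" "vec.subspace E" "E' \<inter> E = {0}"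
  shows "vec.dim E' + vec.dim (S' \<inter> E) \<le> vec.dim S'"
proof -
  have "vec.dim {x + y | x y. x \<in> E' \<and> y \<in> S' \<inter> E} \<le> vec.dim S'"
    using assms(2,3) by (intro vec.dim_subset) (auto intro: vec.subspace_add)
  moreover have "vec.dim (E' \<inter> (S' \<inter> E)) = 0" using assms(5) by auto
  ultimately show ?thesis
    using vec.dim_sums_Int[OF assms(1) vec.subspace_inter[OF assms(2,4)]] by linarith
qed

lemma flag_solid_Int_in_pg_points:
  assumes flag: "pg_flag23 (E', S')" and E: "vec.subspace E"
    and "E' \<inter> E = {0}" "S' \<inter> E \<noteq> {0}"
  shows "S' \<inter> E \<in> pg_points E"
proof -
  note f = pg_flag23D[OF flag]
  have "vec.dim (S' \<inter> E) \<le> 1" using dim_add_dim_Int_le[OF f(1,3,5) E assms(3)] f(2,4) by simp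
  moreover have "vec.dim (S' \<inter> E) \<noteq> 0"
    using assms(4) vec.subspace_0[OF f(3)] vec.subspace_0[OF E] by (simp only: vec.dim_eq_0) blast
  ultimately have "vec.dim (S' \<inter> E) = 1" by linarith
  then show ?thesis using vec.subspace_inter[OF f(3) E] by (simp add: pg_points_def)
qed

lemma nonadjacent_flags_solids_meet_outside:
  assumes "kneser_indep C" "(E\<^sub>1, S\<^sub>1) \<in> C" "(E\<^sub>2, S\<^sub>2) \<in> C" "S\<^sub>1 \<noteq> S\<^sub>2"
    and "E\<^sub>1 \<inter> E = {0}" "E\<^sub>2 \<inter> E = {0}"
  shows "\<not> S\<^sub>1 \<inter> S\<^sub>2 \<subseteq> E"
proof -
  have flags: "pg_flag23 (E\<^sub>1, S\<^sub>1)" "pg_flag23 (E\<^sub>2, S\<^sub>2)"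
    using assms(1-3) by (auto simp: kneser_indep_def)
  have "\<not> kneser_adj (E\<^sub>1, S\<^sub>1) (E\<^sub>2, S\<^sub>2)" using assms(1-3) by (auto simp: kneser_indep_def)
  then have "E\<^sub>1 \<inter> S\<^sub>2 \<noteq> {0} \<or> E\<^sub>2 \<inter> S\<^sub>1 \<noteq> {0}"
    using assms(4) by (auto simp: kneser_adj_def pg_disjoint_def)
  moreover have "0 \<in> E\<^sub>1 \<inter> S\<^sub>2" "0 \<in> E\<^sub>2 \<inter> S\<^sub>1"
    using pg_flag23D[OF flags(1)] pg_flag23D[OF flags(2)] by (simp_all add: vec.subspace_0)
  ultimately obtain x where "x \<noteq> 0" "x \<in> E\<^sub>1 \<inter> S\<^sub>2 \<or> x \<in> E\<^sub>2 \<inter> S\<^sub>1" by blast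
  then show ?thesis
    using pg_flag23D(5)[OF flags(1)] pg_flag23D(5)[OF flags(2)] assms(5,6) by blast
qed

theorem card_solids_meeting_plane_le:
  fixes C :: "('F::{field,finite} pt7 set \<times> 'F pt7 set) set" and E :: "'F pt7 set"
  assumes C: "kneser_indep C" and E: "vec.subspace E" "vec.dim E = 3"
  shows "card {S'. \<exists>E'. (E', S') \<in> C \<and> E' \<inter> E = {0} \<and> S' \<inter> E \<noteq> {0}}
           \<le> (CARD('F)^2 + CARD('F) + 1) * gauss_5_2 CARD('F)"
proof -
  define Sol where "Sol = {S'. \<exists>E'. (E', S') \<in> C \<and> E' \<inter> E = {0} \<and> S' \<inter> E \<noteq> {0}}"
  have flag: "pg_flag23 (E', S')" if "(E', S') \<in> C" for E' S'
    using C that by (auto simp: kneser_indep_def)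
  have point: "S' \<inter> E \<in> pg_points E" if S': "S' \<in> Sol" for S'
  proof -
    obtain E' where E': "(E', S') \<in> C" "E' \<inter> E = {0}" "S' \<inter> E \<noteq> {0}"
      using S' by (auto simp: Sol_def)
    show ?thesis by (rule flag_solid_Int_in_pg_points[OF flag[OF E'(1)] E(1) E'(2,3)])
  qed
  have "card Sol \<le> card ((\<lambda>S'. S' \<inter> E) ` Sol) * gauss_5_2 CARD('F)"
  proof (rule card_le_card_image_mult)
    show "finite Sol" by simp
    fix P assume "P \<in> (\<lambda>S'. S' \<inter> E) ` Sol"
    then have "P \<in> pg_points E" using point by blast
    then have "vec.dim P = 1" "P \<subseteq> E" by (simp_all add: pg_points_def)
    then obtain p where "p \<in> P" "p \<noteq> 0" using vec.dim_eq_0[of P] by fastforce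
    then have p: "p \<noteq> 0" "P = vec.span {p}"
      using dim_1_subspace_eq_span[of P p] \<open>P \<in> pg_points E\<close> by (simp_all add: pg_points_def)
    show "card {S' \<in> Sol. S' \<inter> E = P} \<le> gauss_5_2 CARD('F)"
    proof (rule card_solids_through_point_le[OF p(1)])
      fix S assume "S \<in> {S' \<in> Sol. S' \<inter> E = P}"
      then obtain E' where "(E', S) \<in> C" "S \<inter> E = P" by (auto simp: Sol_def)
      then show "pg_solid S \<and> p \<in> S"
        using pg_flag23D(3,4)[OF flag] \<open>p \<in> P\<close> by (auto simp: pg_solid_def)
    next
      fix S S' assume "S \<in> {S' \<in> Sol. S' \<inter> E = P}" "S' \<in> {S' \<in> Sol. S' \<inter> E = P}" "S \<noteq> S'"
      then obtain E\<^sub>1 E\<^sub>2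
        where "(E\<^sub>1, S) \<in> C" "(E\<^sub>2, S') \<in> C" "E\<^sub>1 \<inter> E = {0}" "E\<^sub>2 \<inter> E = {0}"
        by (auto simp: Sol_def)
      then have "\<not> S \<inter> S' \<subseteq> E"
        by (rule nonadjacent_flags_solids_meet_outside[OF C _ _ \<open>S \<noteq> S'\<close>])
      then show "\<not> S \<inter> S' \<subseteq> vec.span {p}" using p(2) \<open>P \<subseteq> E\<close> by blast
    qed
  qed
  also have "card ((\<lambda>S'. S' \<inter> E) ` Sol) \<le> card (pg_points E)"
    using point by (intro card_mono) (simp_all add: image_subset_iff)
  finally show ?thesis
    using card_pg_points_plane[OF E] by (simp add: Sol_def mult_le_mono1)
qed

lemma plane_points_mult_gauss_5_2:
  assumes "q \<ge> 2"
  shows "(q^2 + q + 1) * gauss_5_2 q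
           = q^8 + 2*q^7 + 4*q^6 + 5*q^5 + 6*q^4 + 5*q^3 + 4*q^2 + 2*q + 1"
  unfolding gauss_5_2_eq[OF assms] by algebra

theorem lemma3p3:
  fixes C :: "(('F::{field,finite}) pt7 set \<times> 'F pt7 set) set"
    and \<xi> :: nat and E S :: "'F pt7 set"
  assumes "kneser_indep C"
    and "\<forall>S'. pg_solid S' \<longrightarrow> card {f\<in>C. snd f = S'} \<le> \<xi>"
    and "(E, S) \<in> C"
  shows "card {(E', S') \<in> C. pg_disjoint E' E \<and> \<not> pg_disjoint S' E}
           \<le> (CARD('F)^2 + CARD('F) + 1) * gauss_5_2 CARD('F) * \<xi>
       \<and> (CARD('F)^2 + CARD('F) + 1) * gauss_5_2 CARD('F)
           = CARD('F)^8 + 2*CARD('F)^7 + 4*CARD('F)^6 + 5*CARD('F)^5 + 6*CARD('F)^4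
             + 5*CARD('F)^3 + 4*CARD('F)^2 + 2*CARD('F) + 1"
proof
  let ?T = "{(E', S') \<in> C. pg_disjoint E' E \<and> \<not> pg_disjoint S' E}"
  have flag: "pg_flag23 f" if "f \<in> C" for f using assms(1) that by (simp add: kneser_indep_def)
  have "card ?T \<le> card (snd ` ?T) * \<xi>"
  proof (rule card_le_card_image_mult)
    fix S' assume "S' \<in> snd ` ?T"
    then have "pg_solid S'" using flag by (auto simp: pg_flag23_def)
    then show "card {f \<in> ?T. snd f = S'} \<le> \<xi>"
      using assms(2) card_mono[of "{f \<in> C. snd f = S'}" "{f \<in> ?T. snd f = S'}"] by force
  qed simp
  also have "card (snd ` ?T)
      \<le> card {S'. \<exists>E'. (E', S') \<in> C \<and> E' \<inter> E = {0} \<and> S' \<inter> E \<noteq> {0}}"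
    by (intro card_mono image_subsetI) (force simp: pg_disjoint_def)+
  also have "\<dots> \<le> (CARD('F)^2 + CARD('F) + 1) * gauss_5_2 CARD('F)"
    using card_solids_meeting_plane_le[OF assms(1)] pg_flag23D(1,2)[OF flag[OF assms(3)]] by blast
  finally show "card ?T \<le> (CARD('F)^2 + CARD('F) + 1) * gauss_5_2 CARD('F) * \<xi>"
    by (simp add: mult_le_mono1)
  show "(CARD('F)^2 + CARD('F) + 1) * gauss_5_2 CARD('F)
           = CARD('F)^8 + 2*CARD('F)^7 + 4*CARD('F)^6 + 5*CARD('F)^5 + 6*CARD('F)^4
             + 5*CARD('F)^3 + 4*CARD('F)^2 + 2*CARD('F) + 1"
    by (rule plane_points_mult_gauss_5_2[OF card_field_ge_2])
qed

end
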